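(* Let $(X,Y)$ be a minimum $s$-$t$ cut in the flow network $G_N$. Then $A \cap X$ is an optimal seed set, i.e. $\pi(A \cap X) \ge \pi(S)$ for every seed set $S$.
   Context: Let $G=(V,E)$ be a finite undirected graph whose vertices are agents. Each agent $i$ has a criticality parameter $\theta_i \in [0,1]$, and the product has a parameter $\phi \in [0,1]$. Agent $i$ is accepting if $\theta_i \le \phi$ and rejecting if $\theta_i > \phi$. A seed set is a set $S \subseteq V$ of accepting agents. $V(S)$ denotes the set of agents $i$ for which there exist $j \in S$ and a path in $G$ from $i$ to $j$ all of whose internal vertices are accepting (paths of length $0$ allowed, so $S \subseteq V(S)$). $V^+(S)$ is the set of accepting agents in $V(S)$ and $V^-(S)$ the set of rejecting agents in $V(S)$. Given constants $p, q > 0$, the payoff of a seed set $S$ is $\pi(S) = p\,|V^+(S)| - q\,|V^-(S)|$; an optimal seed set is a seed set maximizing $\pi$ over all seed sets. For an accepting agent $i$, the cluster of $i$ is $C_i = V(\{i\})$, its interior is $C_i^o = V^+(\{i\})$, and its boundary is $C_i^b = V^-(\{i\})$. Flow network $G_N$: let $C_1,\dots,C_k$ be the distinct sets of the form $C_i$ ($i$ accepting); their interiors are pairwise disjoint. For each $m$ choose one canonical accepting agent $a_m \in C_m^o$, and let $A = \{a_1,\dots,a_k\}$. Let $R = \bigcup_{m} C_m^b$. The directed network $G_N$ has vertex set $\{s,t\} \cup A \cup R$, an edge $s \to a_m$ of capacity $p\,|C_m^o|$ for each $m$, an edge $r \to t$ of capacity $q$ for each $r \in R$, and an edge $a_m \to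 r$ of infinite capacity whenever $r \in C_m^b$. An $s$-$t$ cut $(X,Y)$ is a partition of the vertex set with $s \in X$, $t \in Y$; its value is the total capacity of edges from $X$ to $Y$, and a minimum cut is one of minimum value. *)

theory Defs
  imports Main "HOL-Library.Extended_Real"
begin

text \<open>Agents are vertices of a finite undirected graph with vertex set V and
  symmetric adjacency relation E. theta is the criticality function, phi the product parameter.\<close>

definition accepting :: "('a \<Rightarrow> real) \<Rightarrow> real \<Rightarrow> 'a \<Rightarrow> bool" where
  "accepting \<theta> \<phi> i \<longleftrightarrow> \<theta> i \<le> \<phi>"

definition is_path :: "'a set \<Rightarrow> ('a \<Rightarrow> 'a \<Rightarrow> bool) \<Rightarrow> 'a \<Rightarrow> 'a \<Rightarrow> 'a list \<Rightarrow> bool" where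
  "is_path V E i j xs \<longleftrightarrow> xs \<noteq> [] \<and> hd xs = i \<and> last xs = j \<and> set xs \<subseteq> V \<and>
     (\<forall>k. Suc k < length xs \<longrightarrow> E (xs ! k) (xs ! Suc k))"

definition seed_set :: "'a set \<Rightarrow> ('a \<Rightarrow> real) \<Rightarrow> real \<Rightarrow> 'a set \<Rightarrow> bool" where
  "seed_set V \<theta> \<phi> S \<longleftrightarrow> S \<subseteq> V \<and> (\<forall>i\<in>S. accepting \<theta> \<phi> i)"

definition reached :: "'a set \<Rightarrow> ('a \<Rightarrow> 'a \<Rightarrow> bool) \<Rightarrow> ('a \<Rightarrow> real) \<Rightarrow> real \<Rightarrow> 'a set \<Rightarrow> 'a set" where
  "reached V E \<theta> \<phi> S = {i\<in>V. \<exists>j\<in>S. \<exists>xs. is_path V E i j xs \<and>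
      (\<forall>v\<in>set (butlast (tl xs)). accepting \<theta> \<phi> v)}"

definition reached_pos :: "'a set \<Rightarrow> ('a \<Rightarrow> 'a \<Rightarrow> bool) \<Rightarrow> ('a \<Rightarrow> real) \<Rightarrow> real \<Rightarrow> 'a set \<Rightarrow> 'a set" where
  "reached_pos V E \<theta> \<phi> S = {i \<in> reached V E \<theta> \<phi> S. accepting \<theta> \<phi> i}"

definition reached_neg :: "'a set \<Rightarrow> ('a \<Rightarrow> 'a \<Rightarrow> bool) \<Rightarrow> ('a \<Rightarrow> real) \<Rightarrow> real \<Rightarrow> 'a set \<Rightarrow> 'a set" where
  "reached_neg V E \<theta> \<phi> S = {i \<in> reached V E \<theta> \<phi> S. \<not> accepting \<theta> \<phi> i}"

definition payoff :: "'a set \<Rightarrow> ('a \<Rightarrow> 'a \<Rightarrow> bool) \<Rightarrow> ('a \<Rightarrow> real) \<Rightarrow> real \<Rightarrow> real \<Rightarrow> real \<Rightarrow> 'a set \<Rightarrow> real" where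
  "payoff V E \<theta> \<phi> p q S =
     p * real (card (reached_pos V E \<theta> \<phi> S)) - q * real (card (reached_neg V E \<theta> \<phi> S))"

definition optimal_seed_set :: "'a set \<Rightarrow> ('a \<Rightarrow> 'a \<Rightarrow> bool) \<Rightarrow> ('a \<Rightarrow> real) \<Rightarrow> real \<Rightarrow> real \<Rightarrow> real \<Rightarrow> 'a set \<Rightarrow> bool" where
  "optimal_seed_set V E \<theta> \<phi> p q S \<longleftrightarrow> seed_set V \<theta> \<phi> S \<and>
     (\<forall>S'. seed_set V \<theta> \<phi> S' \<longrightarrow> payoff V E \<theta> \<phi> p q S' \<le> payoff V E \<theta> \<phi> p q S)"

definition cluster :: "'a set \<Rightarrow> ('a \<Rightarrow> 'a \<Rightarrow> bool) \<Rightarrow> ('a \<Rightarrow> real) \<Rightarrow> real \<Rightarrow> 'a \<Rightarrow> 'a set" where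
  "cluster V E \<theta> \<phi> i = reached V E \<theta> \<phi> {i}"

definition interior :: "'a set \<Rightarrow> ('a \<Rightarrow> 'a \<Rightarrow> bool) \<Rightarrow> ('a \<Rightarrow> real) \<Rightarrow> real \<Rightarrow> 'a \<Rightarrow> 'a set" where
  "interior V E \<theta> \<phi> i = reached_pos V E \<theta> \<phi> {i}"

definition boundary :: "'a set \<Rightarrow> ('a \<Rightarrow> 'a \<Rightarrow> bool) \<Rightarrow> ('a \<Rightarrow> real) \<Rightarrow> real \<Rightarrow> 'a \<Rightarrow> 'a set" where
  "boundary V E \<theta> \<phi> i = reached_neg V E \<theta> \<phi> {i}"

definition canonical_reps :: "'a set \<Rightarrow> ('a \<Rightarrow> 'a \<Rightarrow> bool) \<Rightarrow> ('a \<Rightarrow> real) \<Rightarrow> real \<Rightarrow> 'a set \<Rightarrow> bool" where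
  "canonical_reps V E \<theta> \<phi> A \<longleftrightarrow> A \<subseteq> {i\<in>V. accepting \<theta> \<phi> i} \<and>
     (\<forall>i\<in>V. accepting \<theta> \<phi> i \<longrightarrow> (\<exists>!a. a \<in> A \<and> cluster V E \<theta> \<phi> a = cluster V E \<theta> \<phi> i))"

definition Rset :: "'a set \<Rightarrow> ('a \<Rightarrow> 'a \<Rightarrow> bool) \<Rightarrow> ('a \<Rightarrow> real) \<Rightarrow> real \<Rightarrow> 'a set" where
  "Rset V E \<theta> \<phi> = (\<Union>i\<in>{i\<in>V. accepting \<theta> \<phi> i}. boundary V E \<theta> \<phi> i)"

datatype 'a fnode = Src | Snk | Ag 'a

definition net_nodes :: "'a set \<Rightarrow> ('a \<Rightarrow> 'a \<Rightarrow> bool) \<Rightarrow> ('a \<Rightarrow> real) \<Rightarrow> real \<Rightarrow> 'a set \<Rightarrow> 'a fnode set" where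
  "net_nodes V E \<theta> \<phi> A = {Src, Snk} \<union> Ag ` A \<union> Ag ` Rset V E \<theta> \<phi>"

text \<open>Capacity of the directed edge u -> v in G_N (0 if there is no such edge).\<close>
fun net_cap :: "'a set \<Rightarrow> ('a \<Rightarrow> 'a \<Rightarrow> bool) \<Rightarrow> ('a \<Rightarrow> real) \<Rightarrow> real \<Rightarrow> real \<Rightarrow> real \<Rightarrow> 'a set
    \<Rightarrow> 'a fnode \<Rightarrow> 'a fnode \<Rightarrow> ereal" where
  "net_cap V E \<theta> \<phi> p q A Src (Ag a) =
     (if a \<in> A then ereal (p * real (card (interior V E \<theta> \<phi> a))) else 0)"
| "net_cap V E \<theta> \<phi> p q A (Ag r) Snk = (if r \<in> Rset V E \<theta> \<phi> then ereal q else 0)"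
| "net_cap V E \<theta> \<phi> p q A (Ag a) (Ag r) =
     (if a \<in> A \<and> r \<in> boundary V E \<theta> \<phi> a then \<infinity> else 0)"
| "net_cap V E \<theta> \<phi> p q A u v = 0"

definition is_st_cut :: "'a set \<Rightarrow> ('a \<Rightarrow> 'a \<Rightarrow> bool) \<Rightarrow> ('a \<Rightarrow> real) \<Rightarrow> real \<Rightarrow> 'a set \<Rightarrow> 'a fnode set \<Rightarrow> bool" where
  "is_st_cut V E \<theta> \<phi> A X \<longleftrightarrow> X \<subseteq> net_nodes V E \<theta> \<phi> A \<and> Src \<in> X \<and> Snk \<notin> X"

definition cut_value :: "'a set \<Rightarrow> ('a \<Rightarrow> 'a \<Rightarrow> bool) \<Rightarrow> ('a \<Rightarrow> real) \<Rightarrow> real \<Rightarrow> real \<Rightarrow> real \<Rightarrow> 'a set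
    \<Rightarrow> 'a fnode set \<Rightarrow> ereal" where
  "cut_value V E \<theta> \<phi> p q A X =
     (\<Sum>u\<in>X. \<Sum>v\<in>net_nodes V E \<theta> \<phi> A - X. net_cap V E \<theta> \<phi> p q A u v)"

definition is_min_cut :: "'a set \<Rightarrow> ('a \<Rightarrow> 'a \<Rightarrow> bool) \<Rightarrow> ('a \<Rightarrow> real) \<Rightarrow> real \<Rightarrow> real \<Rightarrow> real \<Rightarrow> 'a set
    \<Rightarrow> 'a fnode set \<Rightarrow> bool" where
  "is_min_cut V E \<theta> \<phi> p q A X \<longleftrightarrow> is_st_cut V E \<theta> \<phi> A X \<and>
     (\<forall>X'. is_st_cut V E \<theta> \<phi> A X' \<longrightarrow> cut_value V E \<theta> \<phi> p q A X \<le> cut_value V E \<theta> \<phi> p q A X')"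

end

theory Submission
  imports Defs
begin

text \<open>Every seed set reaches exactly what its canonical representatives reach, so it suffices to
  compare subsets T of A; their clusters have disjoint interiors, whence
  \<open>\<pi>(T) = (\<Sum>a\<in>T. p |C\<^sub>a\<^sup>o|) - q |\<Union>a\<in>T. C\<^sub>a\<^sup>b|\<close>. The cut \<open>{s} \<union> T \<union> V\<^sup>-(T)\<close> has value
  \<open>(\<Sum>a\<in>A. p |C\<^sub>a\<^sup>o|) - \<pi>(T)\<close>. Conversely, a cut X of finite value crosses no infinite edge, so it
  contains the boundary of every representative it contains, and the edges \<open>s \<rightarrow> a\<close> with \<open>a \<notin> X\<close>
  and \<open>r \<rightarrow> t\<close> with \<open>r \<in> X\<close> alone show that its value is at least
  \<open>(\<Sum>a\<in>A. p |C\<^sub>a\<^sup>o|) - \<pi>(A \<inter> X)\<close>. Hence a minimum cut maximises the payoff.\<close>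

lemma is_path_iff_successively:
  "is_path V E i j xs \<longleftrightarrow> xs \<noteq> [] \<and> hd xs = i \<and> last xs = j \<and> set xs \<subseteq> V \<and> successively E xs"
  unfolding is_path_def successively_conv_nth by blast

lemma set_butlast_tl_rev: "set (butlast (tl (rev xs))) = set (butlast (tl xs))"
proof -
  have "tl (rev ys) = rev (butlast ys)" for ys :: "'a list"
    using butlast_rev[of "rev ys"] by simp
  then have "butlast (tl (rev xs)) = rev (butlast (tl xs))"
    by (simp only: butlast_tl butlast_rev)
  then show ?thesis by simp
qed

lemma is_path_rev:
  assumes "\<And>u v. E u v \<Longrightarrow> E v u" and "is_path V E i j xs"
  shows "is_path V E j i (rev xs)"
proof -
  have "successively E xs" using assms(2) by (simp add: is_path_iff_successively)
  then have "successively (\<lambda>x y. E y x) xs" by (rule successively_mono) (use assms(1) in blast)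
  then show ?thesis using assms(2) by (auto simp: is_path_iff_successively hd_rev last_rev)
qed

lemma is_path_append:
  assumes "is_path V E i j xs" and "is_path V E j k ys"
  shows "is_path V E i k (xs @ tl ys)"
    and "set (butlast (tl (xs @ tl ys))) \<subseteq> set (butlast (tl xs)) \<union> {j} \<union> set (butlast (tl ys))"
proof -
  obtain ys' where ys: "ys = j # ys'"
    using assms(2) unfolding is_path_iff_successively by (metis hd_Cons_tl)
  have xs: "xs \<noteq> []" "last xs = j" "successively E xs"
    using assms(1) by (auto simp: is_path_iff_successively)
  have "is_path V E i k (xs @ tl ys) \<and>
    set (butlast (tl (xs @ tl ys))) \<subseteq> set (butlast (tl xs)) \<union> {j} \<union> set (butlast (tl ys))"
  proof (cases "ys' = []")
    case True
    then show ?thesis using assms ys by (auto simp: is_path_iff_successively)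
  next
    case ne: False
    have "successively E ys'" "E j (hd ys')"
      using assms(2) ne ys by (auto simp: is_path_iff_successively successively_Cons)
    then have "successively E (xs @ ys')" using xs by (auto simp: successively_append_iff)
    moreover have "set (butlast (tl (xs @ ys'))) \<subseteq> set (butlast (tl xs)) \<union> {j} \<union> set (butlast ys')"
    proof (cases "tl xs = []")
      case True
      then show ?thesis using xs by auto
    next
      case False
      have "tl xs = butlast (tl xs) @ [j]"
        using False xs by (metis append_butlast_last_id last_tl)
      then have "set (tl xs) = set (butlast (tl xs)) \<union> {j}"
        by (metis Un_insert_right empty_set list.simps(15) set_append sup_bot.right_neutral)
      moreover have "butlast (tl (xs @ ys')) = tl xs @ butlast ys'"
        using ne xs by (simp add: butlast_append)
      ultimately show ?thesis by auto
    qed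
    ultimately show ?thesis using assms ys ne by (auto simp: is_path_iff_successively last_append)
  qed
  then show "is_path V E i k (xs @ tl ys)"
    and "set (butlast (tl (xs @ tl ys))) \<subseteq> set (butlast (tl xs)) \<union> {j} \<union> set (butlast (tl ys))"
    by blast+
qed

locale cluster_network =
  fixes V :: "'a set" and E :: "'a \<Rightarrow> 'a \<Rightarrow> bool" and \<theta> :: "'a \<Rightarrow> real"
    and \<phi> p q :: real and A :: "'a set"
  assumes finite_V: "finite V"
    and E_sym: "\<And>u v. E u v \<Longrightarrow> E v u"
    and p_nonneg: "0 \<le> p" and q_nonneg: "0 \<le> q"
    and canonical: "canonical_reps V E \<theta> \<phi> A"
begin

abbreviation "acc \<equiv> accepting \<theta> \<phi>"
abbreviation "Rch \<equiv> reached V E \<theta> \<phi>"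
abbreviation "Rneg \<equiv> reached_neg V E \<theta> \<phi>"
abbreviation "\<pi> \<equiv> payoff V E \<theta> \<phi> p q"
abbreviation "weight a \<equiv> p * real (card (interior V E \<theta> \<phi> a))"

lemma reached_eq_UN: "Rch S = (\<Union>j\<in>S. Rch {j})"
  unfolding reached_def by auto

lemma reached_subset: "Rch S \<subseteq> V"
  unfolding reached_def by auto

lemma reached_sym: "x \<in> Rch {y} \<Longrightarrow> y \<in> Rch {x}"
proof -
  assume "x \<in> Rch {y}"
  then obtain xs where xs: "is_path V E x y xs" "\<forall>v\<in>set (butlast (tl xs)). acc v"
    unfolding reached_def by auto
  have "y \<in> V" using xs(1) unfolding is_path_def by (metis last_in_set subsetD)
  moreover have "is_path V E y x (rev xs)" using is_path_rev[OF _ xs(1)] E_sym by blast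
  ultimately show ?thesis using xs(2) unfolding reached_def by (auto simp: set_butlast_tl_rev)
qed

lemma reached_trans:
  assumes "acc x" "w \<in> Rch {x}" "x \<in> Rch {y}" shows "w \<in> Rch {y}"
proof -
  obtain xs where xs: "is_path V E w x xs" "\<forall>v\<in>set (butlast (tl xs)). acc v" "w \<in> V"
    using assms(2) unfolding reached_def by auto
  obtain ys where ys: "is_path V E x y ys" "\<forall>v\<in>set (butlast (tl ys)). acc v"
    using assms(3) unfolding reached_def by auto
  show ?thesis
    using is_path_append[OF xs(1) ys(1)] xs ys assms(1) unfolding reached_def by blast
qed

lemma cluster_eq_if_reached:
  assumes "acc a" "acc b" "a \<in> Rch {b}" shows "Rch {a} = Rch {b}"
  using reached_trans[OF assms(1) _ assms(3)] reached_trans[OF assms(2) _ reached_sym[OF assms(3)]]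
  by blast

lemma reps_subset: "A \<subseteq> V" and reps_accepting: "a \<in> A \<Longrightarrow> acc a"
  using canonical unfolding canonical_reps_def by auto

lemma finite_reps: "finite A"
  using reps_subset finite_V finite_subset by blast

lemma reps_eq_if_common_accepting:
  assumes "a \<in> A" "b \<in> A" "x \<in> Rch {a}" "x \<in> Rch {b}" "acc x" shows "a = b"
proof -
  have "\<exists>!c. c \<in> A \<and> cluster V E \<theta> \<phi> c = cluster V E \<theta> \<phi> x"
    using canonical assms(3,5) reached_subset unfolding canonical_reps_def by blast
  moreover have "Rch {a} = Rch {x}" "Rch {b} = Rch {x}"
    using cluster_eq_if_reached reps_accepting assms reached_sym by metis+
  ultimately show ?thesis using assms(1,2) unfolding cluster_def by blast
qed

lemma reached_eq_reached_reps:
  assumes "seed_set V \<theta> \<phi> S" obtains T where "T \<subseteq> A" "Rch S = Rch T"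
proof
  let ?T = "{a \<in> A. \<exists>j\<in>S. Rch {a} = Rch {j}}"
  have "\<exists>a\<in>A. Rch {a} = Rch {j}" if "j \<in> S" for j
    using canonical assms that unfolding canonical_reps_def seed_set_def cluster_def by blast
  then have "(\<Union>j\<in>S. Rch {j}) = (\<Union>a\<in>?T. Rch {a})" by blast
  then show "Rch S = Rch ?T" using reached_eq_UN[of S] reached_eq_UN[of ?T] by argo
qed auto

lemma payoff_eq_payoff_reps:
  assumes "seed_set V \<theta> \<phi> S" obtains T where "T \<subseteq> A" "\<pi> S = \<pi> T"
proof -
  obtain T where "T \<subseteq> A" "Rch S = Rch T" using reached_eq_reached_reps[OF assms] .
  moreover from \<open>Rch S = Rch T\<close> have "\<pi> S = \<pi> T"
    unfolding payoff_def reached_pos_def reached_neg_def by (simp only:)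
  ultimately show thesis using that by blast
qed

lemma reached_neg_eq_UN: "Rneg S = (\<Union>a\<in>S. boundary V E \<theta> \<phi> a)"
  unfolding reached_neg_def boundary_def by (subst reached_eq_UN) auto

lemma payoff_reps:
  assumes "T \<subseteq> A" shows "\<pi> T = (\<Sum>a\<in>T. weight a) - q * real (card (Rneg T))"
proof -
  have "reached_pos V E \<theta> \<phi> T = (\<Union>a\<in>T. interior V E \<theta> \<phi> a)"
    unfolding reached_pos_def interior_def by (subst reached_eq_UN) auto
  moreover have "card (\<Union>a\<in>T. interior V E \<theta> \<phi> a) = (\<Sum>a\<in>T. card (interior V E \<theta> \<phi> a))"
  proof (rule card_UN_disjoint)
    show "finite T" using assms finite_reps finite_subset by blast
    show "\<forall>i\<in>T. finite (interior V E \<theta> \<phi> i)"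
      unfolding interior_def reached_pos_def using reached_subset finite_V finite_subset by fastforce
    show "\<forall>i\<in>T. \<forall>j\<in>T. i \<noteq> j \<longrightarrow> interior V E \<theta> \<phi> i \<inter> interior V E \<theta> \<phi> j = {}"
      unfolding interior_def reached_pos_def using reps_eq_if_common_accepting assms by blast
  qed
  ultimately show ?thesis unfolding payoff_def by (simp add: sum_distrib_left)
qed

abbreviation "N \<equiv> net_nodes V E \<theta> \<phi> A"
abbreviation "c \<equiv> net_cap V E \<theta> \<phi> p q A"
abbreviation "R \<equiv> Rset V E \<theta> \<phi>"
abbreviation "cutval \<equiv> cut_value V E \<theta> \<phi> p q A"

lemma Rset_rejecting: "r \<in> R \<Longrightarrow> r \<in> V \<and> \<not> acc r"
  unfolding Rset_def boundary_def reached_neg_def using reached_subset[of "{_}"] by auto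

lemma boundary_subset_Rset: "a \<in> A \<Longrightarrow> boundary V E \<theta> \<phi> a \<subseteq> R"
  unfolding Rset_def using reps_subset reps_accepting by auto

lemma reached_neg_reps_subset_Rset: "T \<subseteq> A \<Longrightarrow> Rneg T \<subseteq> R"
  unfolding reached_neg_eq_UN using boundary_subset_Rset by auto

lemma reps_notin_Rset: "a \<in> A \<Longrightarrow> a \<notin> R"
  using reps_accepting Rset_rejecting by auto

lemma finite_Rset: "finite R"
  by (meson Rset_rejecting finite_V finite_subset subsetI)

lemma finite_net_nodes: "finite N"
  unfolding net_nodes_def using finite_reps finite_Rset by simp

lemma net_cap_nonneg: "0 \<le> c u v"
  using p_nonneg q_nonneg by (cases u; cases v) auto

lemma cut_value_ge_partial_sum:
  assumes "is_st_cut V E \<theta> \<phi> A X" "U \<subseteq> X" "\<And>u. u \<in> U \<Longrightarrow> W u \<subseteq> N - X"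
  shows "(\<Sum>u\<in>U. \<Sum>v\<in>W u. c u v) \<le> cutval X"
proof -
  have "finite X" using assms(1) finite_net_nodes finite_subset unfolding is_st_cut_def by blast
  have "(\<Sum>u\<in>U. \<Sum>v\<in>W u. c u v) \<le> (\<Sum>u\<in>U. \<Sum>v\<in>N - X. c u v)"
    using assms(3) finite_net_nodes
    by (intro sum_mono sum_mono2) (auto intro: net_cap_nonneg)
  also have "\<dots> \<le> (\<Sum>u\<in>X. \<Sum>v\<in>N - X. c u v)"
    using \<open>finite X\<close> assms(2) by (intro sum_mono2) (auto intro: sum_nonneg net_cap_nonneg)
  finally show ?thesis unfolding cut_value_def .
qed

definition seed_cut :: "'a set \<Rightarrow> 'a fnode set" where
  "seed_cut T = insert Src (Ag ` T \<union> Ag ` Rneg T)"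

lemma is_st_cut_seed_cut: "T \<subseteq> A \<Longrightarrow> is_st_cut V E \<theta> \<phi> A (seed_cut T)"
  unfolding is_st_cut_def seed_cut_def net_nodes_def using reached_neg_reps_subset_Rset[of T] by blast

lemma seed_cut_source_row:
  assumes "T \<subseteq> A"
  shows "(\<Sum>v\<in>N - seed_cut T. c Src v) = ereal (\<Sum>a\<in>A - T. weight a)"
proof -
  have "(\<Sum>v\<in>N - seed_cut T. c Src v) = (\<Sum>v\<in>Ag ` (A - T). c Src v)"
  proof (rule sum.mono_neutral_right)
    show "Ag ` (A - T) \<subseteq> N - seed_cut T"
      unfolding seed_cut_def net_nodes_def
      using reached_neg_reps_subset_Rset[OF assms] reps_notin_Rset by auto
    show "\<forall>v\<in>N - seed_cut T - Ag ` (A - T). c Src v = 0"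
    proof
      fix v assume v: "v \<in> N - seed_cut T - Ag ` (A - T)"
      then show "c Src v = 0" by (cases v) (auto simp: seed_cut_def)
    qed
  qed (use finite_net_nodes in auto)
  also have "\<dots> = (\<Sum>a\<in>A - T. c Src (Ag a))"
    by (simp add: sum.reindex inj_on_def)
  also have "\<dots> = (\<Sum>a\<in>A - T. ereal (weight a))"
    by (rule sum.cong) auto
  finally show ?thesis by simp
qed

lemma seed_cut_seed_row:
  assumes "T \<subseteq> A" "a \<in> T"
  shows "(\<Sum>v\<in>N - seed_cut T. c (Ag a) v) = 0"
proof (rule sum.neutral, rule ballI)
  fix v assume v: "v \<in> N - seed_cut T"
  show "c (Ag a) v = 0"
  proof (cases v)
    case (Ag x)
    then have "x \<notin> boundary V E \<theta> \<phi> a"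
      using v assms(2) unfolding seed_cut_def reached_neg_eq_UN by auto
    then show ?thesis using Ag by simp
  qed (use assms reps_notin_Rset in auto)
qed

lemma seed_cut_boundary_row:
  assumes "T \<subseteq> A" "r \<in> Rneg T"
  shows "(\<Sum>v\<in>N - seed_cut T. c (Ag r) v) = ereal q"
proof -
  have "r \<notin> A" using assms reached_neg_reps_subset_Rset reps_notin_Rset by auto
  have "(\<Sum>v\<in>N - seed_cut T. c (Ag r) v) = (\<Sum>v\<in>{Snk}. c (Ag r) v)"
  proof (rule sum.mono_neutral_right)
    show "{Snk} \<subseteq> N - seed_cut T" unfolding seed_cut_def net_nodes_def by auto
    show "\<forall>v\<in>N - seed_cut T - {Snk}. c (Ag r) v = 0"
    proof
      fix v assume "v \<in> N - seed_cut T - {Snk}"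
      then show "c (Ag r) v = 0" using \<open>r \<notin> A\<close> by (cases v) auto
    qed
  qed (use finite_net_nodes in auto)
  then show ?thesis using assms reached_neg_reps_subset_Rset by auto
qed

lemma cut_value_seed_cut:
  assumes "T \<subseteq> A"
  shows "cutval (seed_cut T) = ereal ((\<Sum>a\<in>A. weight a) - \<pi> T)"
proof -
  let ?row = "\<lambda>u. \<Sum>v\<in>N - seed_cut T. c u v"
  have fin: "finite T" "finite (Rneg T)"
    using assms finite_reps finite_Rset reached_neg_reps_subset_Rset finite_subset by metis+
  have disj: "Ag ` T \<inter> Ag ` Rneg T = {}"
    using assms reached_neg_reps_subset_Rset reps_notin_Rset by auto
  have "cutval (seed_cut T) = ?row Src + (\<Sum>u\<in>Ag ` T \<union> Ag ` Rneg T. ?row u)"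
    unfolding cut_value_def seed_cut_def by (rule sum.insert) (use fin in auto)
  also have "(\<Sum>u\<in>Ag ` T \<union> Ag ` Rneg T. ?row u) = (\<Sum>u\<in>Ag ` T. ?row u) + (\<Sum>u\<in>Ag ` Rneg T. ?row u)"
    by (rule sum.union_disjoint) (use fin disj in auto)
  also have "(\<Sum>u\<in>Ag ` T. ?row u) = (\<Sum>a\<in>T. ?row (Ag a))"
    by (simp add: sum.reindex inj_on_def)
  also have "\<dots> = 0" using seed_cut_seed_row[OF assms] by simp
  also have "(\<Sum>u\<in>Ag ` Rneg T. ?row u) = (\<Sum>r\<in>Rneg T. ?row (Ag r))"
    by (simp add: sum.reindex inj_on_def)
  also have "\<dots> = (\<Sum>r\<in>Rneg T. ereal q)" using seed_cut_boundary_row[OF assms] by simp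
  finally have "cutval (seed_cut T) = ereal ((\<Sum>a\<in>A - T. weight a) + q * real (card (Rneg T)))"
    using seed_cut_source_row[OF assms] by (simp add: mult.commute)
  moreover have "(\<Sum>a\<in>A - T. weight a) = (\<Sum>a\<in>A. weight a) - (\<Sum>a\<in>T. weight a)"
    by (rule sum_diff[OF finite_reps assms])
  ultimately show ?thesis using payoff_reps[OF assms] by simp
qed

lemma cut_value_infinite_if_boundary_crosses:
  assumes "is_st_cut V E \<theta> \<phi> A X" "a \<in> A" "Ag a \<in> X"
    and "r \<in> boundary V E \<theta> \<phi> a" "Ag r \<notin> X"
  shows "cutval X = \<infinity>"
proof -
  have "Ag r \<in> N" using boundary_subset_Rset assms(2,4) unfolding net_nodes_def by auto
  then have "(\<Sum>u\<in>{Ag a}. \<Sum>v\<in>{Ag r}. c u v) \<le> cutval X"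
    using assms by (intro cut_value_ge_partial_sum) auto
  then show ?thesis using assms(2,4) by simp
qed

lemma cut_value_ge_source_and_sink_edges:
  assumes X: "is_st_cut V E \<theta> \<phi> A X"
  shows "ereal ((\<Sum>a\<in>{a \<in> A. Ag a \<notin> X}. weight a) + q * real (card {r \<in> R. Ag r \<in> X}))
    \<le> cutval X"
proof -
  define RX where "RX = {r \<in> R. Ag r \<in> X}"
  let ?W = "\<lambda>u. if u = Src then Ag ` {a \<in> A. Ag a \<notin> X} else {Snk}"
  have "finite (Ag ` RX)" "Src \<notin> Ag ` RX" using finite_Rset by (auto simp: RX_def)
  moreover have "(\<Sum>u\<in>Ag ` RX. \<Sum>v\<in>{Snk}. c u v) = (\<Sum>u\<in>Ag ` RX. \<Sum>v\<in>?W u. c u v)"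
    by (rule sum.cong) auto
  ultimately have "(\<Sum>u\<in>insert Src (Ag ` RX). \<Sum>v\<in>?W u. c u v)
      = (\<Sum>v\<in>Ag ` {a \<in> A. Ag a \<notin> X}. c Src v) + (\<Sum>u\<in>Ag ` RX. \<Sum>v\<in>{Snk}. c u v)"
    by simp
  also have "\<dots> = ereal ((\<Sum>a\<in>{a \<in> A. Ag a \<notin> X}. weight a) + q * real (card RX))"
    by (simp add: sum.reindex inj_on_def RX_def mult.commute)
  finally have "(\<Sum>u\<in>insert Src (Ag ` RX). \<Sum>v\<in>?W u. c u v) = \<dots>" .
  moreover have "(\<Sum>u\<in>insert Src (Ag ` RX). \<Sum>v\<in>?W u. c u v) \<le> cutval X"
  proof (rule cut_value_ge_partial_sum[OF X])
    have "Src \<in> X" "Snk \<in> N - X" "Ag ` {a \<in> A. Ag a \<notin> X} \<subseteq> N - X"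
      using X unfolding is_st_cut_def net_nodes_def by auto
    then show "insert Src (Ag ` RX) \<subseteq> X" and "\<And>u. u \<in> insert Src (Ag ` RX) \<Longrightarrow> ?W u \<subseteq> N - X"
      unfolding RX_def by auto
  qed
  ultimately show ?thesis unfolding RX_def by simp
qed

lemma finite_cut_contains_boundaries:
  assumes X: "is_st_cut V E \<theta> \<phi> A X" and finite: "cutval X \<noteq> \<infinity>"
  shows "Rneg {a \<in> A. Ag a \<in> X} \<subseteq> {r \<in> R. Ag r \<in> X}"
proof
  fix r assume r: "r \<in> Rneg {a \<in> A. Ag a \<in> X}"
  then obtain a where "a \<in> A" "Ag a \<in> X" "r \<in> boundary V E \<theta> \<phi> a"
    unfolding reached_neg_eq_UN by auto
  then have "Ag r \<in> X" using cut_value_infinite_if_boundary_crosses[OF X] finite by blast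
  then show "r \<in> {r \<in> R. Ag r \<in> X}" using r reached_neg_reps_subset_Rset[of "{a \<in> A. Ag a \<in> X}"] by auto
qed

lemma payoff_gap_le_cut_value:
  assumes X: "is_st_cut V E \<theta> \<phi> A X"
  shows "ereal ((\<Sum>a\<in>A. weight a) - \<pi> {a \<in> A. Ag a \<in> X}) \<le> cutval X"
proof (cases "cutval X = \<infinity>")
  case False
  define T where "T = {a \<in> A. Ag a \<in> X}"
  have T: "T \<subseteq> A" unfolding T_def by auto
  have "card (Rneg T) \<le> card {r \<in> R. Ag r \<in> X}"
    using finite_cut_contains_boundaries[OF X False] finite_Rset unfolding T_def by (intro card_mono) auto
  moreover have "A - T = {a \<in> A. Ag a \<notin> X}" unfolding T_def by auto
  ultimately have "ereal ((\<Sum>a\<in>A. weight a) - \<pi> T)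
      \<le> ereal ((\<Sum>a\<in>{a \<in> A. Ag a \<notin> X}. weight a) + q * real (card {r \<in> R. Ag r \<in> X}))"
    using payoff_reps[OF T] sum_diff[OF finite_reps T, of weight] q_nonneg
    by (simp add: mult_left_mono)
  also have "\<dots> \<le> cutval X" by (rule cut_value_ge_source_and_sink_edges[OF X])
  finally show ?thesis unfolding T_def .
qed simp

end

theorem mainTheorem3:
  fixes V :: "'a set" and E :: "'a \<Rightarrow> 'a \<Rightarrow> bool" and \<theta> :: "'a \<Rightarrow> real"
    and \<phi> p q :: real and A :: "'a set" and X :: "'a fnode set"
  assumes "finite V"
    and "\<And>u v. E u v \<Longrightarrow> u \<in> V \<and> v \<in> V"
    and "\<And>u v. E u v \<Longrightarrow> E v u"
    and "\<And>i. i \<in> V \<Longrightarrow> 0 \<le> \<theta> i \<and> \<theta> i \<le> 1"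
    and "0 \<le> \<phi>" and "\<phi> \<le> 1"
    and "p > 0" and "q > 0"
    and "canonical_reps V E \<theta> \<phi> A"
    and "is_min_cut V E \<theta> \<phi> p q A X"
  shows "optimal_seed_set V E \<theta> \<phi> p q {a \<in> A. Ag a \<in> X}"
proof -
  interpret cluster_network V E \<theta> \<phi> p q A
    using assms by unfold_locales auto
  let ?T = "{a \<in> A. Ag a \<in> X}"
  have X: "is_st_cut V E \<theta> \<phi> A X"
    and min: "\<And>X'. is_st_cut V E \<theta> \<phi> A X' \<Longrightarrow> cutval X \<le> cutval X'"
    using assms(10) unfolding is_min_cut_def by auto
  have "\<pi> S \<le> \<pi> ?T" if S: "seed_set V \<theta> \<phi> S" for S
  proof -
    obtain T where T: "T \<subseteq> A" "\<pi> S = \<pi> T" using payoff_eq_payoff_reps[OF S] .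
    have "ereal ((\<Sum>a\<in>A. weight a) - \<pi> ?T) \<le> cutval X"
      by (rule payoff_gap_le_cut_value[OF X])
    also have "\<dots> \<le> cutval (seed_cut T)" by (rule min[OF is_st_cut_seed_cut[OF T(1)]])
    also have "\<dots> = ereal ((\<Sum>a\<in>A. weight a) - \<pi> T)" by (rule cut_value_seed_cut[OF T(1)])
    finally show ?thesis using T(2) by simp
  qed
  moreover have "seed_set V \<theta> \<phi> ?T"
    unfolding seed_set_def using reps_subset reps_accepting by auto
  ultimately show ?thesis unfolding optimal_seed_set_def by blast
qed

end
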